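(* Let $G$ be a finite, connected game board in which every edge is marked with an arrow and there are no sinks and no sources. Then $G$ contains a cycle cell.
   Context: A board is a simple connected planar graph embedded in the plane, together with its bounded cells (bounded faces). An edge marked with an arrow is oriented in one of its two directions. A sink is a vertex all of whose incident edges are marked with arrows pointing toward it; a source is a vertex all of whose incident edges are marked with arrows pointing away from it. A cycle cell is a bounded cell all of whose boundary edges are marked with arrows all cycling in the same direction (all clockwise or all counterclockwise) around that cell. *)

theory Defs
  imports Main
begin

(* Combinatorial model of a board (a simple connected plane graph with its
   bounded cells), via a rotation system (combinatorial map) of genus 0.

   V       : vertex set
   E       : set of darts (ordered pairs (u,w) = edge uw seen from u);
             an undirected edge {u,w} is the pair of darts (u,w),(w,u)
   rot     : rotation system: cyclic order of the darts around each vertex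
             (the order in which they appear around the vertex in the plane)
   outer   : a dart of the unbounded cell
   faces are the orbits of the face permutation  d \<mapsto> rot (rev d). *)

definition rev_dart :: "'v \<times> 'v \<Rightarrow> 'v \<times> 'v" where
  "rev_dart d = (snd d, fst d)"

definition simple_graph :: "'v set \<Rightarrow> ('v \<times> 'v) set \<Rightarrow> bool" where
  "simple_graph V E \<longleftrightarrow> finite V \<and> E \<subseteq> V \<times> V
     \<and> (\<forall>u w. (u, w) \<in> E \<longrightarrow> (w, u) \<in> E \<and> u \<noteq> w)"

definition connected_graph :: "'v set \<Rightarrow> ('v \<times> 'v) set \<Rightarrow> bool" where
  "connected_graph V E \<longleftrightarrow> V \<noteq> {} \<and> (\<forall>u\<in>V. \<forall>w\<in>V. (u, w) \<in> E\<^sup>*)"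

definition orbit :: "('d \<Rightarrow> 'd) \<Rightarrow> 'd \<Rightarrow> 'd set" where
  "orbit f d = {(f ^^ n) d | n. True}"

definition rotation_system :: "('v \<times> 'v) set \<Rightarrow> ('v \<times> 'v \<Rightarrow> 'v \<times> 'v) \<Rightarrow> bool" where
  "rotation_system E rot \<longleftrightarrow> bij_betw rot E E
     \<and> (\<forall>d\<in>E. fst (rot d) = fst d \<and> orbit rot d = {d'\<in>E. fst d' = fst d})"

definition face_perm :: "('v \<times> 'v \<Rightarrow> 'v \<times> 'v) \<Rightarrow> 'v \<times> 'v \<Rightarrow> 'v \<times> 'v" where
  "face_perm rot d = rot (rev_dart d)"

(* cells (faces) of the map: orbits of the face permutation; each is the set
   of darts traversed by the boundary walk of the cell, in one fixed
   rotational sense *)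
definition faces :: "('v \<times> 'v) set \<Rightarrow> ('v \<times> 'v \<Rightarrow> 'v \<times> 'v) \<Rightarrow> ('v \<times> 'v) set set" where
  "faces E rot = orbit (face_perm rot) ` E"

(* the map is planar (genus 0): Euler's formula V - E + F = 2 *)
definition planar_map :: "'v set \<Rightarrow> ('v \<times> 'v) set \<Rightarrow> ('v \<times> 'v \<Rightarrow> 'v \<times> 'v) \<Rightarrow> bool" where
  "planar_map V E rot \<longleftrightarrow> rotation_system E rot
     \<and> (E = {} \<or> int (card V) - int (card E div 2) + int (card (faces E rot)) = 2)"

definition board :: "'v set \<Rightarrow> ('v \<times> 'v) set \<Rightarrow> ('v \<times> 'v \<Rightarrow> 'v \<times> 'v) \<Rightarrow> 'v \<times> 'v \<Rightarrow> bool" where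
  "board V E rot outer \<longleftrightarrow> simple_graph V E \<and> connected_graph V E
     \<and> planar_map V E rot \<and> (E \<noteq> {} \<longrightarrow> outer \<in> E)"

definition bounded_cells :: "('v \<times> 'v) set \<Rightarrow> ('v \<times> 'v \<Rightarrow> 'v \<times> 'v) \<Rightarrow> 'v \<times> 'v \<Rightarrow> ('v \<times> 'v) set set" where
  "bounded_cells E rot outer = faces E rot - {orbit (face_perm rot) outer}"

(* arrow marking: A is the set of darts (u,w) whose edge carries an arrow
   pointing from u to w; every edge is marked, in exactly one direction *)
definition all_marked :: "('v \<times> 'v) set \<Rightarrow> ('v \<times> 'v) set \<Rightarrow> bool" where
  "all_marked E A \<longleftrightarrow> A \<subseteq> E \<and> (\<forall>d\<in>E. (d \<in> A) \<noteq> (rev_dart d \<in> A))"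

definition is_sink :: "('v \<times> 'v) set \<Rightarrow> ('v \<times> 'v) set \<Rightarrow> 'v \<Rightarrow> bool" where
  "is_sink E A v \<longleftrightarrow> (\<forall>w. (v, w) \<in> E \<longrightarrow> (w, v) \<in> A)"

definition is_source :: "('v \<times> 'v) set \<Rightarrow> ('v \<times> 'v) set \<Rightarrow> 'v \<Rightarrow> bool" where
  "is_source E A v \<longleftrightarrow> (\<forall>w. (v, w) \<in> E \<longrightarrow> (v, w) \<in> A)"

(* a cycle cell: all boundary edges point along the boundary walk in the same
   rotational sense (either all along it, or all against it) *)
definition cycle_cell :: "('v \<times> 'v) set \<Rightarrow> ('v \<times> 'v) set \<Rightarrow> bool" where
  "cycle_cell A C \<longleftrightarrow> (\<forall>d\<in>C. d \<in> A) \<or> (\<forall>d\<in>C. rev_dart d \<in> A)"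

end

theory Submission
  imports Defs
begin

(* Call s a switch of a permutation f with respect to a set A of darts if f moves s
   across the boundary of A. Around a vertex that is neither a sink nor a source the
   rotation passes both outgoing and incoming darts, so it has at least two switches
   there; along the boundary walk of a bounded cell that is not a cycle cell the arrows
   change between pointing along and against the walk, so the face permutation has at
   least two switches there. A dart d is a rotation switch exactly when its reverse is
   not a face switch (the face permutation maps rev d to rot d, and reversal flips the
   arrow), so the two kinds of switches together number 2e. Hence
   2e >= 2v + 2(f - 1), i.e. v - e + f <= 1, contradicting Euler's formula. *)

lemma funpow_periodic:
  assumes "finite E" "bij_betw f E E" "x \<in> E"
  obtains p where "p > 0" "(f ^^ p) x = x"
proof -
  have iter_in: "(f ^^ n) y \<in> E" if "y \<in> E" for n y
    using bij_betw_apply[OF bij_betw_funpow[OF assms(2)]] that .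
  then have "range (\<lambda>n. (f ^^ n) x) \<subseteq> E" using assms(3) by blast
  then have "\<not> inj (\<lambda>n. (f ^^ n) x)"
    using assms(1) finite_imageD finite_subset infinite_UNIV_nat by blast
  then obtain i j where ij: "i < j" "(f ^^ i) x = (f ^^ j) x"
    by (metis (no_types, lifting) injI linorder_neqE_nat)
  then have "(f ^^ i) ((f ^^ (j - i)) x) = (f ^^ i) x"
    by (simp flip: funpow_add comp_apply[of "f ^^ i"])
  then have "(f ^^ (j - i)) x = x"
    using bij_betw_imp_inj_on[OF bij_betw_funpow[OF assms(2)]] iter_in assms(3)
    by (meson inj_onD)
  with ij(1) show ?thesis using that[of "j - i"] by simp
qed

lemma orbit_iff: "y \<in> orbit f x \<longleftrightarrow> (\<exists>n. (f ^^ n) x = y)"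
  unfolding orbit_def by auto

lemma orbit_trans: "y \<in> orbit f x \<Longrightarrow> z \<in> orbit f y \<Longrightarrow> z \<in> orbit f x"
  unfolding orbit_def by (auto simp flip: comp_apply[of "f ^^ _"] funpow_add)

lemma orbit_subset: "bij_betw f E E \<Longrightarrow> x \<in> E \<Longrightarrow> orbit f x \<subseteq> E"
  unfolding orbit_def by (auto intro: bij_betw_apply[OF bij_betw_funpow])

lemma orbit_sym:
  assumes "finite E" "bij_betw f E E" "x \<in> E" "y \<in> orbit f x"
  shows "x \<in> orbit f y"
proof -
  obtain i where i: "y = (f ^^ i) x" using assms(4) unfolding orbit_def by blast
  obtain p where p: "p > 0" "(f ^^ p) x = x" using funpow_periodic[OF assms(1-3)] .
  have "((f ^^ p) ^^ i) x = x" using p(2) by (induction i) auto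
  moreover have "(f ^^ p) ^^ i = f ^^ ((p - 1) * i) \<circ> f ^^ i"
    using p(1) by (simp add: funpow_mult funpow_add[symmetric] algebra_simps)
  ultimately have "(f ^^ ((p - 1) * i)) y = x" using i by simp
  then show ?thesis unfolding orbit_def by blast
qed

lemma orbit_eq:
  assumes "finite E" "bij_betw f E E" "x \<in> E" "y \<in> orbit f x"
  shows "orbit f y = orbit f x"
proof
  show "orbit f y \<subseteq> orbit f x" using orbit_trans[OF assms(4)] by blast
  show "orbit f x \<subseteq> orbit f y" using orbit_trans[OF orbit_sym[OF assms]] by blast
qed

lemma orbits_disjoint:
  assumes "finite E" "bij_betw f E E" "x \<in> E" "y \<in> E" "orbit f x \<noteq> orbit f y"
  shows "orbit f x \<inter> orbit f y = {}"
proof (rule ccontr)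
  assume "orbit f x \<inter> orbit f y \<noteq> {}"
  then obtain z where "z \<in> orbit f x" "z \<in> orbit f y" by blast
  then show False
    using orbit_eq[OF assms(1-3), of z] orbit_eq[OF assms(1,2,4), of z] assms(5) by simp
qed

lemma funpow_leaves_set:
  assumes "a \<in> A" "(f ^^ n) a \<notin> A"
  shows "\<exists>k. (f ^^ k) a \<in> A \<and> f ((f ^^ k) a) \<notin> A"
  using assms(2) by (induction n) (use assms(1) in auto)

definition switches :: "('a \<Rightarrow> 'a) \<Rightarrow> 'a set \<Rightarrow> 'a set \<Rightarrow> 'a set" where
  "switches f A X = {s \<in> X. (s \<in> A) \<noteq> (f s \<in> A)}"

lemma two_le_card_switches_orbit:
  assumes "finite E" "bij_betw f E E" "x \<in> E"
    and "a \<in> orbit f x" "b \<in> orbit f x" "a \<in> A" "b \<notin> A"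
  shows "2 \<le> card (switches f A (orbit f x))"
proof -
  have "orbit f a = orbit f x" "orbit f b = orbit f x"
    using orbit_eq[OF assms(1-3)] assms(4,5) by simp_all
  then have "b \<in> orbit f a" "a \<in> orbit f b"
    using assms(4,5) by simp_all
  then obtain n m where n: "(f ^^ n) a = b" and m: "(f ^^ m) b = a"
    unfolding orbit_iff by blast
  obtain k where k: "(f ^^ k) a \<in> A" "f ((f ^^ k) a) \<notin> A"
    using funpow_leaves_set[of a A n f] assms(6,7) unfolding n by blast
  obtain l where l: "(f ^^ l) b \<notin> A" "f ((f ^^ l) b) \<in> A"
    using funpow_leaves_set[of b "- A" m f] assms(6,7) unfolding m by blast
  have "(f ^^ k) a \<in> orbit f x" "(f ^^ l) b \<in> orbit f x"
    using orbit_trans[OF assms(4)] orbit_trans[OF assms(5)] unfolding orbit_def by blast+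
  with k l have "{(f ^^ k) a, (f ^^ l) b} \<subseteq> switches f A (orbit f x)"
    unfolding switches_def by auto
  moreover have "finite (switches f A (orbit f x))"
    using finite_subset[OF orbit_subset[OF assms(2,3)] assms(1)] unfolding switches_def by simp
  moreover have "(f ^^ k) a \<noteq> (f ^^ l) b" using k(1) l(1) by auto
  ultimately show ?thesis by (metis card_2_iff card_mono)
qed

lemma card_lower_bound_disjoint_family:
  assumes "finite X" "finite I"
    and "\<And>i j. i \<in> I \<Longrightarrow> j \<in> I \<Longrightarrow> i \<noteq> j \<Longrightarrow> B i \<inter> B j = {}"
    and "\<And>i. i \<in> I \<Longrightarrow> k \<le> card (X \<inter> B i)"
  shows "k * card I \<le> card X"
proof -
  have "k * card I \<le> (\<Sum>i\<in>I. card (X \<inter> B i))"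
    using sum_bounded_below[of I k "\<lambda>i. card (X \<inter> B i)"] assms(4) by (simp add: mult.commute)
  also have "\<dots> = card (\<Union>i\<in>I. X \<inter> B i)"
    using assms(1-3) by (intro card_UN_disjoint[symmetric]) auto
  also have "\<dots> \<le> card X" using assms(1) by (intro card_mono) auto
  finally show ?thesis .
qed

lemma rev_dart_rev_dart [simp]: "rev_dart (rev_dart d) = d"
  unfolding rev_dart_def by simp

lemma rev_dart_in: "sym E \<Longrightarrow> d \<in> E \<Longrightarrow> rev_dart d \<in> E"
  unfolding rev_dart_def sym_def by (metis prod.collapse)

lemma bij_betw_rev_dart: "sym E \<Longrightarrow> bij_betw rev_dart E E"
  by (rule bij_betw_byWitness[of _ rev_dart]) (auto intro: rev_dart_in)

lemma bij_betw_face_perm: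
  assumes "sym E" "rotation_system E rot"
  shows "bij_betw (face_perm rot) E E"
proof -
  have "face_perm rot = rot \<circ> rev_dart" unfolding face_perm_def by auto
  then show ?thesis using bij_betw_trans[OF bij_betw_rev_dart[OF assms(1)]] assms(2)
    unfolding rotation_system_def by metis
qed

lemma faces_disjoint:
  assumes "finite E" "sym E" "rotation_system E rot"
    and "F1 \<in> faces E rot" "F2 \<in> faces E rot" "F1 \<noteq> F2"
  shows "F1 \<inter> F2 = {}"
  using assms orbits_disjoint[OF assms(1) bij_betw_face_perm[OF assms(2,3)]]
  unfolding faces_def by blast

lemma card_eq_rot_switches_plus_face_switches:
  assumes "finite E" "sym E" "all_marked E A"
  shows "card E = card (switches rot A E) + card (switches (face_perm rot) A E)"
proof -
  have marked: "d \<in> E \<Longrightarrow> (rev_dart d \<in> A) \<longleftrightarrow> d \<notin> A" for d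
    using assms(3) unfolding all_marked_def by blast
  have "E - switches rot A E = rev_dart ` switches (face_perm rot) A E"
  proof (intro equalityI subsetI)
    fix d assume "d \<in> E - switches rot A E"
    then have "rev_dart d \<in> switches (face_perm rot) A E"
      using marked rev_dart_in[OF assms(2)] unfolding switches_def face_perm_def by auto
    then show "d \<in> rev_dart ` switches (face_perm rot) A E" by (metis image_eqI rev_dart_rev_dart)
  next
    fix d assume "d \<in> rev_dart ` switches (face_perm rot) A E"
    then show "d \<in> E - switches rot A E"
      using marked rev_dart_in[OF assms(2)] unfolding switches_def face_perm_def by auto
  qed
  moreover have "card (rev_dart ` switches (face_perm rot) A E) = card (switches (face_perm rot) A E)"
    by (rule card_image) (metis inj_onI rev_dart_rev_dart)
  moreover have "switches rot A E \<subseteq> E" unfolding switches_def by auto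
  ultimately show ?thesis
    using assms(1) by (metis card_Diff_subset card_mono finite_subset le_add_diff_inverse)
qed

lemma two_le_card_rot_switches_at:
  assumes "finite E" "rotation_system E rot" "all_marked E A"
    and "\<not> is_sink E A v" "\<not> is_source E A v"
  shows "2 \<le> card (switches rot A E \<inter> {d. fst d = v})"
proof -
  obtain w where w: "(v, w) \<in> E" "(v, w) \<in> A"
    using assms(3,4) unfolding is_sink_def all_marked_def rev_dart_def by fastforce
  obtain w' where w': "(v, w') \<in> E" "(v, w') \<notin> A"
    using assms(5) unfolding is_source_def by blast
  have orb: "orbit rot (v, w) = {d \<in> E. fst d = v}"
    using assms(2) w(1) unfolding rotation_system_def by fastforce
  have "2 \<le> card (switches rot A (orbit rot (v, w)))"
    using assms(2) unfolding rotation_system_def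
    by (intro two_le_card_switches_orbit[OF assms(1) _ w(1), of _ "(v, w)" "(v, w')"])
       (use orb w w' in auto)
  also have "switches rot A (orbit rot (v, w)) = switches rot A E \<inter> {d. fst d = v}"
    unfolding orb switches_def by auto
  finally show ?thesis .
qed

lemma two_le_card_face_switches:
  assumes "finite E" "sym E" "rotation_system E rot" "all_marked E A"
    and "F \<in> faces E rot" "\<not> cycle_cell A F"
  shows "2 \<le> card (switches (face_perm rot) A E \<inter> F)"
proof -
  obtain x where x: "x \<in> E" "F = orbit (face_perm rot) x"
    using assms(5) unfolding faces_def by blast
  have bij: "bij_betw (face_perm rot) E E" using bij_betw_face_perm[OF assms(2,3)] .
  have FE: "F \<subseteq> E" using orbit_subset[OF bij x(1)] x(2) by simp
  obtain a b where "a \<in> F" "rev_dart a \<notin> A" "b \<in> F" "b \<notin> A"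
    using assms(6) unfolding cycle_cell_def by blast
  moreover have "a \<in> A" using calculation(1,2) FE assms(4) unfolding all_marked_def by blast
  ultimately have "2 \<le> card (switches (face_perm rot) A F)"
    using two_le_card_switches_orbit[OF assms(1) bij x(1), of a b A] x(2) by simp
  also have "switches (face_perm rot) A F = switches (face_perm rot) A E \<inter> F"
    using FE unfolding switches_def by auto
  finally show ?thesis .
qed

theorem theorem6p1:
  fixes V :: "'v set" and E :: "('v \<times> 'v) set"
    and rot :: "'v \<times> 'v \<Rightarrow> 'v \<times> 'v" and outer :: "'v \<times> 'v"
    and A :: "('v \<times> 'v) set"
  assumes "board V E rot outer"
    and "all_marked E A"
    and "\<forall>v\<in>V. \<not> is_sink E A v"
    and "\<forall>v\<in>V. \<not> is_source E A v"
  shows "\<exists>C\<in>bounded_cells E rot outer. cycle_cell A C"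
proof (rule ccontr)
  assume no_cycle: "\<not> ?thesis"
  have fin: "finite V" "finite E" and sym: "sym E" and rs: "rotation_system E rot"
    using assms(1) finite_subset[of E "V \<times> V"]
    unfolding board_def simple_graph_def planar_map_def sym_def by auto
  obtain v where "v \<in> V" using assms(1) unfolding board_def connected_graph_def by blast
  then have "E \<noteq> {}" using assms(3) unfolding is_sink_def by blast
  then have euler: "int (card V) - int (card E div 2) + int (card (faces E rot)) = 2"
    and outer: "orbit (face_perm rot) outer \<in> faces E rot"
    using assms(1) unfolding board_def planar_map_def faces_def by auto
  have "2 * card V \<le> card (switches rot A E)"
    using fin assms(2-4) two_le_card_rot_switches_at[OF fin(2) rs]
    by (intro card_lower_bound_disjoint_family[where B = "\<lambda>v. {d. fst d = v}"])
       (auto simp: switches_def)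
  moreover have "2 * card (bounded_cells E rot outer) \<le> card (switches (face_perm rot) A E)"
    using fin no_cycle two_le_card_face_switches[OF fin(2) sym rs assms(2)]
      faces_disjoint[OF fin(2) sym rs]
    by (intro card_lower_bound_disjoint_family[where B = id])
       (auto simp: switches_def bounded_cells_def faces_def)
  moreover have "card (faces E rot) = Suc (card (bounded_cells E rot outer))"
    using finite_imageI[OF fin(2)] outer unfolding bounded_cells_def faces_def
    by (rule card.remove)
  ultimately show False
    using euler card_eq_rot_switches_plus_face_switches[OF fin(2) sym assms(2), of rot] by linarith
qed

end
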